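(* Let $r\in(0,1)$ and $\lambda(r)=\ln\frac{1+r}{1-r}$. Let $\overline{S}_{\lambda(r)}=\{z\in\mathbb{S}: d_{\mathbb{S}}(z,0)\leqslant\lambda(r)\}$. Then $$\overline{S}_{\lambda(r)}\subset\left[-\frac{4}{\pi}\arctan r,\frac{4}{\pi}\arctan r\right]\times\left[-\frac{2}{\pi}\lambda(r),\frac{2}{\pi}\lambda(r)\right]$$ (as a subset of $\mathbb{C}\cong\mathbb{R}^2$, real part times imaginary part), and moreover $$\{\operatorname{Re} z : z\in \overline{S}_{\lambda(r)}\}=\left[-\frac{4}{\pi}\arctan r,\frac{4}{\pi}\arctan r\right].$$
   Context: $\mathbb{S}=\{z\in\mathbb{C}:-1<\operatorname{Re} z<1\}$. The hyperbolic density of $\mathbb{S}$ is $\rho_{\mathbb{S}}(z)=\frac{\pi}{2}\big/\cos\left(\frac{\pi}{2}\operatorname{Re} z\right)$ and $d_{\mathbb{S}}(z_1,z_2)=\inf_\gamma\int_\gamma\rho_{\mathbb{S}}(z)|dz|$ over $C^1$ curves $\gamma$ in $\mathbb{S}$ joining $z_1$ to $z_2$ (this is the hyperbolic distance of $\mathbb{S}$ transported from the unit disc $\mathbb{U}$, whose density is $\frac{2}{1-|z|^2}$, by the conformal map $z\mapsto\tan(\pi z/4)$ from $\mathbb{S}$ onto $\mathbb{U}$). *)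

theory Defs
  imports "HOL-Analysis.Analysis"
begin

definition strip :: "complex set" where
  "strip = {z. -1 < Re z \<and> Re z < 1}"

definition rho_strip :: "complex \<Rightarrow> real" where
  "rho_strip z = (pi / 2) / cos (pi / 2 * Re z)"

definition strip_curves :: "complex \<Rightarrow> complex \<Rightarrow> (real \<Rightarrow> complex) set" where
  "strip_curves z1 z2 = {g. g C1_differentiable_on {0..1} \<and> g ` {0..1} \<subseteq> strip
      \<and> g 0 = z1 \<and> g 1 = z2}"

definition hyp_length_strip :: "(real \<Rightarrow> complex) \<Rightarrow> real" where
  "hyp_length_strip g = integral {0..1} (\<lambda>t. rho_strip (g t) * norm (vector_derivative g (at t within {0..1})))"

definition d_strip :: "complex \<Rightarrow> complex \<Rightarrow> real" where
  "d_strip z1 z2 = Inf (hyp_length_strip ` strip_curves z1 z2)"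

definition lambda_r :: "real \<Rightarrow> real" where
  "lambda_r r = ln ((1 + r) / (1 - r))"

definition closed_hyp_disc_strip :: "real \<Rightarrow> complex set" where
  "closed_hyp_disc_strip R = {z \<in> strip. d_strip z 0 \<le> R}"

end

theory Submission
  imports Defs
begin

text \<open>
  The density rho(z) = (pi/2) / cos (pi/2 Re z) depends only on Re z and is at least pi/2.
  Let F(x) = 2 artanh (tan (pi/4 x)), a primitive of rho along the real axis. The differentials
  of F (Re z) and of pi/2 Im z are bounded by rho, so their increments along a curve never exceed
  its hyperbolic length; hence d(z,0) >= |F (Re z)| and d(z,0) >= pi/2 |Im z|. For real x the
  straight segment to 0 attains the first bound, so d(x,0) = F |x|. Since F is odd and increasing
  with F (4/pi arctan r) = 2 artanh r = lambda(r), the real parts of the closed disc of radius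
  lambda(r) fill exactly [-4/pi arctan r, 4/pi arctan r].
\<close>

lemma cos_pi_half_mult_pos:
  assumes "\<bar>x\<bar> < 1"
  shows "cos (pi / 2 * x) > 0"
proof -
  have "\<bar>pi / 2 * x\<bar> < pi / 2"
    using assms by (simp add: abs_mult)
  then show ?thesis
    by (intro cos_gt_zero_pi) (auto simp: abs_less_iff)
qed

lemma abs_tan_less_1:
  assumes "\<bar>u\<bar> < pi / 4"
  shows "\<bar>tan u\<bar> < 1"
proof -
  have "tan (- (pi / 4)) < tan u" "tan u < tan (pi / 4)"
    using assms by (intro tan_monotone; simp add: abs_less_iff)+
  then show ?thesis by (simp add: tan_45)
qed

lemma abs_four_div_pi_arctan_less_1:
  assumes "\<bar>r\<bar> < 1"
  shows "\<bar>4 / pi * arctan r\<bar> < 1"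
proof -
  have "arctan \<bar>r\<bar> < arctan 1"
    using assms arctan_less_iff by blast
  then have "arctan \<bar>r\<bar> * 4 < pi"
    by (simp add: arctan_one)
  then show ?thesis
    by (simp add: abs_mult abs_arctan field_simps)
qed

text \<open>Signed distance d_strip x 0 of a real point x: its image tan (pi/4 x) in the unit disc
  lies at hyperbolic distance 2 artanh |tan (pi/4 x)| from 0.\<close>
definition strip_axis_dist :: "real \<Rightarrow> real" where
  "strip_axis_dist x = 2 * artanh (tan (pi / 4 * x))"

lemma lambda_r_eq_artanh: "lambda_r r = 2 * artanh r"
  by (simp add: lambda_r_def artanh_def)

lemma strip_axis_dist_0 [simp]: "strip_axis_dist 0 = 0"
  by (simp add: strip_axis_dist_def)

lemma strip_axis_dist_minus:
  assumes "\<bar>x\<bar> < 1"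
  shows "strip_axis_dist (- x) = - strip_axis_dist x"
  using abs_tan_less_1[of "pi / 4 * x"] assms by (simp add: strip_axis_dist_def abs_mult)

lemma strip_axis_dist_has_real_derivative:
  assumes "\<bar>x\<bar> < 1"
  shows "(strip_axis_dist has_real_derivative (pi / 2) / cos (pi / 2 * x)) (at x within A)"
proof -
  define u where "u = pi / 4 * x"
  have u: "\<bar>u\<bar> < pi / 4" using assms by (simp add: u_def abs_mult)
  have cu: "cos u > 0" using u by (intro cos_gt_zero_pi) auto
  have "cos (2 * u) > 0" using cos_pi_half_mult_pos[OF assms] by (simp add: u_def)
  then have c2u: "(cos u)\<^sup>2 - (sin u)\<^sup>2 > 0" by (simp only: cos_double)
  have tan: "((\<lambda>x. tan (pi / 4 * x)) has_real_derivative inverse ((cos u)\<^sup>2) * (pi / 4)) (at x within A)"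
    unfolding u_def using cu[unfolded u_def]
    by (intro DERIV_chain2[OF DERIV_tan] derivative_eq_intros) auto
  have "(strip_axis_dist has_real_derivative
          2 * (1 / (1 - (tan u)\<^sup>2) * (inverse ((cos u)\<^sup>2) * (pi / 4)))) (at x within A)"
    unfolding strip_axis_dist_def[abs_def] u_def
    by (intro DERIV_cmult DERIV_chain2[OF artanh_real_has_field_derivative tan[unfolded u_def]])
       (use abs_tan_less_1[OF u] in \<open>simp add: u_def\<close>)
  also have "2 * (1 / (1 - (tan u)\<^sup>2) * (inverse ((cos u)\<^sup>2) * (pi / 4)))
      = (pi / 2) / ((cos u)\<^sup>2 - (sin u)\<^sup>2)"
    using cu c2u by (simp add: tan_def field_simps)
  also have "\<dots> = (pi / 2) / cos (2 * u)"
    by (simp only: cos_double)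
  finally show ?thesis by (simp add: u_def)
qed

lemma strip_axis_dist_strict_mono: "strict_mono_on {-1<..<1} strip_axis_dist"
proof (rule strict_mono_onI)
  fix x y :: real assume "x \<in> {-1<..<1}" "y \<in> {-1<..<1}" "x < y"
  then show "strip_axis_dist x < strip_axis_dist y"
  proof (intro DERIV_pos_imp_increasing[OF \<open>x < y\<close>] exI conjI)
    fix t assume "x \<le> t" "t \<le> y"
    then have t: "\<bar>t\<bar> < 1"
      using \<open>x \<in> {-1<..<1}\<close> \<open>y \<in> {-1<..<1}\<close> by auto
    show "(strip_axis_dist has_real_derivative (pi / 2) / cos (pi / 2 * t)) (at t)"
      by (rule strip_axis_dist_has_real_derivative[OF t])
    show "0 < (pi / 2) / cos (pi / 2 * t)"
      using cos_pi_half_mult_pos[OF t] by simp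
  qed
qed

lemma abs_strip_axis_dist:
  assumes "\<bar>x\<bar> < 1"
  shows "\<bar>strip_axis_dist x\<bar> = strip_axis_dist \<bar>x\<bar>"
proof -
  have "0 \<le> strip_axis_dist \<bar>x\<bar>"
    using strict_mono_on_leD[OF strip_axis_dist_strict_mono, of 0 "\<bar>x\<bar>"] assms by simp
  then show ?thesis
    using strip_axis_dist_minus[OF assms] by (cases "x \<ge> 0") auto
qed

lemma strip_axis_dist_double_arctan: "strip_axis_dist ((4 / pi) * arctan r) = lambda_r r"
  by (simp add: strip_axis_dist_def lambda_r_eq_artanh tan_arctan)

lemma strip_curvesE:
  assumes "g \<in> strip_curves z1 z2"
  obtains D where "\<And>t. t \<in> {0..1} \<Longrightarrow> (g has_vector_derivative D t) (at t)"
    and "continuous_on {0..1} D" and "continuous_on {0..1} g"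
    and "g ` {0..1} \<subseteq> strip" and "g 0 = z1" and "g 1 = z2"
proof -
  have "\<exists>D. (\<forall>t\<in>{0..1}. (g has_vector_derivative D t) (at t)) \<and> continuous_on {0..1} D"
    and "g ` {0..1} \<subseteq> strip" "g 0 = z1" "g 1 = z2"
    using assms by (auto simp: strip_curves_def C1_differentiable_on_def)
  then obtain D where D: "\<And>t. t \<in> {0..1} \<Longrightarrow> (g has_vector_derivative D t) (at t)"
      "continuous_on {0..1} D"
    and "g ` {0..1} \<subseteq> strip" "g 0 = z1" "g 1 = z2"
    by blast
  moreover have "continuous_on {0..1} g"
    using D(1) by (intro continuous_at_imp_continuous_on ballI has_vector_derivative_continuous) auto
  ultimately show ?thesis using that by blast
qed

lemma continuous_on_rho_strip: "continuous_on strip rho_strip"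
  unfolding rho_strip_def[abs_def]
proof (intro continuous_intros ballI)
  fix z assume "z \<in> strip"
  then have "\<bar>Re z\<bar> < 1" by (auto simp: strip_def)
  then show "cos (pi / 2 * Re z) \<noteq> 0" using cos_pi_half_mult_pos by force
qed

lemma rho_strip_ge: "w \<in> strip \<Longrightarrow> pi / 2 \<le> rho_strip w"
  using cos_pi_half_mult_pos[of "Re w"]
  by (auto simp: rho_strip_def strip_def field_simps)

lemma hyp_length_strip_has_integral:
  assumes g: "g \<in> strip_curves z1 z2"
    and D: "\<And>t. t \<in> {0..1} \<Longrightarrow> (g has_vector_derivative D t) (at t)"
    and "continuous_on {0..1} D"
  shows "((\<lambda>t. rho_strip (g t) * norm (D t)) has_integral hyp_length_strip g) {0..1}"
proof -
  obtain "continuous_on {0..1} g" "g ` {0..1} \<subseteq> strip"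
    using strip_curvesE[OF g] by metis
  then have "continuous_on {0..1} (\<lambda>t. rho_strip (g t) * norm (D t))"
    by (intro continuous_intros continuous_on_compose2[OF continuous_on_rho_strip] assms(3))
  moreover have "hyp_length_strip g = integral {0..1} (\<lambda>t. rho_strip (g t) * norm (D t))"
    unfolding hyp_length_strip_def
  proof (intro integral_cong)
    fix t :: real assume "t \<in> {0..1}"
    then have "vector_derivative g (at t within {0..1}) = D t"
      by (intro vector_derivative_at_within_ivl[OF D]) auto
    then show "rho_strip (g t) * norm (vector_derivative g (at t within {0..1}))
        = rho_strip (g t) * norm (D t)" by simp
  qed
  ultimately show ?thesis
    by (simp add: integrable_continuous_interval integrable_integral)
qed

lemma hyp_length_strip_ge_diff:
  fixes \<phi> :: "complex \<Rightarrow> real"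
  assumes g: "g \<in> strip_curves z1 z2"
    and \<phi>: "\<And>w. w \<in> strip \<Longrightarrow> (\<phi> has_derivative \<Phi> w) (at w)"
    and bound: "\<And>w v. w \<in> strip \<Longrightarrow> \<Phi> w v \<le> rho_strip w * norm v"
  shows "\<phi> z2 - \<phi> z1 \<le> hyp_length_strip g"
proof -
  obtain D where D: "\<And>t. t \<in> {0..1} \<Longrightarrow> (g has_vector_derivative D t) (at t)"
    and "continuous_on {0..1} D" and gS: "g ` {0..1} \<subseteq> strip" and "g 0 = z1" "g 1 = z2"
    using strip_curvesE[OF g] by metis
  have "((\<lambda>t. \<phi> (g t)) has_vector_derivative \<Phi> (g t) (D t)) (at t within {0..1})"
    if t: "t \<in> {0..1}" for t
  proof -
    have lin: "linear (\<Phi> (g t))"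
      using \<phi> gS t by (blast intro: has_derivative_linear)
    have "(g has_derivative (\<lambda>s. s *\<^sub>R D t)) (at t within {0..1})"
      using D[OF t] by (simp add: has_vector_derivative_def has_derivative_at_withinI)
    moreover have "(\<phi> has_derivative \<Phi> (g t)) (at (g t))"
      using \<phi> gS t by blast
    ultimately have "((\<lambda>t. \<phi> (g t)) has_derivative (\<lambda>s. \<Phi> (g t) (s *\<^sub>R D t))) (at t within {0..1})"
      by (rule has_derivative_compose)
    then show ?thesis
      by (simp add: has_vector_derivative_def linear.scaleR[OF lin])
  qed
  then have "((\<lambda>t. \<Phi> (g t) (D t)) has_integral \<phi> (g 1) - \<phi> (g 0)) {0..1}"
    by (intro fundamental_theorem_of_calculus) auto
  then have "((\<lambda>t. \<Phi> (g t) (D t)) has_integral \<phi> z2 - \<phi> z1) {0..1}"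
    using \<open>g 0 = z1\<close> \<open>g 1 = z2\<close> by simp
  then show ?thesis
    by (rule has_integral_le[OF _ hyp_length_strip_has_integral[OF g D \<open>continuous_on {0..1} D\<close>]])
       (use bound gS in \<open>auto simp: image_subset_iff\<close>)
qed

lemma hyp_length_strip_nonneg:
  assumes "g \<in> strip_curves z1 z2"
  shows "0 \<le> hyp_length_strip g"
proof -
  have "(\<lambda>_. 0) z2 - (\<lambda>_. 0) z1 \<le> hyp_length_strip g"
    by (rule hyp_length_strip_ge_diff[OF assms, of _ "\<lambda>_ _. 0"])
       (auto intro!: mult_nonneg_nonneg order_trans[OF _ rho_strip_ge])
  then show ?thesis by simp
qed

lemma convex_strip: "convex strip"
proof -
  have "strip = {z. Re z > -1} \<inter> {z. Re z < 1}"
    by (auto simp: strip_def)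
  then show ?thesis
    by (metis convex_Int convex_halfspace_Re_gt convex_halfspace_Re_lt)
qed

lemma linepath_in_strip_curves:
  assumes "z1 \<in> strip" "z2 \<in> strip"
  shows "linepath z1 z2 \<in> strip_curves z1 z2"
proof -
  have "linepath z1 z2 C1_differentiable_on {0..1}"
    unfolding C1_differentiable_on_def
    by (intro exI[of _ "\<lambda>_. z2 - z1"]) (simp add: has_vector_derivative_linepath_within)
  moreover have "linepath z1 z2 ` {0..1} \<subseteq> strip"
    unfolding linepath_image_01 using assms convex_strip by (rule closed_segment_subset)
  ultimately show ?thesis
    by (simp add: strip_curves_def linepath_def)
qed

lemma d_strip_ge_abs_diff:
  fixes \<phi> :: "complex \<Rightarrow> real"
  assumes "z1 \<in> strip" "z2 \<in> strip"
    and \<phi>: "\<And>w. w \<in> strip \<Longrightarrow> (\<phi> has_derivative \<Phi> w) (at w)"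
    and bound: "\<And>w v. w \<in> strip \<Longrightarrow> \<bar>\<Phi> w v\<bar> \<le> rho_strip w * norm v"
  shows "\<bar>\<phi> z1 - \<phi> z2\<bar> \<le> d_strip z1 z2"
  unfolding d_strip_def
proof (rule cInf_greatest)
  show "hyp_length_strip ` strip_curves z1 z2 \<noteq> {}"
    using linepath_in_strip_curves[OF assms(1,2)] by blast
next
  fix l assume "l \<in> hyp_length_strip ` strip_curves z1 z2"
  then obtain g where g: "g \<in> strip_curves z1 z2" and l: "l = hyp_length_strip g"
    by blast
  have "\<phi> z2 - \<phi> z1 \<le> l"
    unfolding l using g \<phi>
  proof (rule hyp_length_strip_ge_diff)
    fix w v assume "w \<in> strip"
    show "\<Phi> w v \<le> rho_strip w * norm v"
      using bound[OF \<open>w \<in> strip\<close>, of v] by linarith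
  qed
  moreover have "(- \<phi> z2) - (- \<phi> z1) \<le> l"
    unfolding l using g
  proof (rule hyp_length_strip_ge_diff)
    fix w v assume "w \<in> strip"
    show "((\<lambda>z. - \<phi> z) has_derivative (\<lambda>v. - \<Phi> w v)) (at w)"
      using \<phi>[OF \<open>w \<in> strip\<close>] by (rule has_derivative_minus)
    show "- \<Phi> w v \<le> rho_strip w * norm v"
      using bound[OF \<open>w \<in> strip\<close>, of v] by linarith
  qed
  ultimately show "\<bar>\<phi> z1 - \<phi> z2\<bar> \<le> l"
    by linarith
qed

lemma d_strip_ge_Im:
  assumes "z1 \<in> strip" "z2 \<in> strip"
  shows "pi / 2 * \<bar>Im z1 - Im z2\<bar> \<le> d_strip z1 z2"
proof -
  have bound: "\<bar>pi / 2 * Im v\<bar> \<le> rho_strip w * norm v" if "w \<in> strip" for w v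
  proof -
    have "\<bar>pi / 2 * Im v\<bar> = pi / 2 * \<bar>Im v\<bar>" by (simp add: abs_mult)
    also have "\<dots> \<le> rho_strip w * norm v"
      using rho_strip_ge[OF that] abs_Im_le_cmod[of v] pi_gt_zero by (intro mult_mono) linarith+
    finally show ?thesis .
  qed
  have "pi / 2 * \<bar>Im z1 - Im z2\<bar> = \<bar>pi / 2 * Im z1 - pi / 2 * Im z2\<bar>"
    unfolding right_diff_distrib[symmetric] abs_mult by simp
  also have "\<dots> \<le> d_strip z1 z2"
    by (rule d_strip_ge_abs_diff[where \<Phi> = "\<lambda>_ v. pi / 2 * Im v", OF assms _ bound])
      (auto intro!: derivative_eq_intros)
  finally show ?thesis .
qed

lemma d_strip_ge_Re:
  assumes "z1 \<in> strip" "z2 \<in> strip"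
  shows "\<bar>strip_axis_dist (Re z1) - strip_axis_dist (Re z2)\<bar> \<le> d_strip z1 z2"
proof (rule d_strip_ge_abs_diff[OF assms])
  fix w assume w: "w \<in> strip"
  then have "\<bar>Re w\<bar> < 1" by (auto simp: strip_def)
  from has_derivative_compose[OF has_derivative_Re[OF has_derivative_ident]
      strip_axis_dist_has_real_derivative[OF this, unfolded has_field_derivative_def]]
  show "((\<lambda>w. strip_axis_dist (Re w)) has_derivative (\<lambda>v. rho_strip w * Re v)) (at w)"
    unfolding rho_strip_def by simp
next
  fix w v assume "w \<in> strip"
  then have "0 \<le> rho_strip w"
    using rho_strip_ge[of w] pi_gt_zero by linarith
  then show "\<bar>rho_strip w * Re v\<bar> \<le> rho_strip w * norm v"
    unfolding abs_mult using abs_Re_le_cmod[of v] by (simp add: mult_left_mono)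
qed

lemma hyp_length_strip_real_linepath:
  assumes "\<bar>a\<bar> < 1" "\<bar>b\<bar> < 1"
  shows "hyp_length_strip (linepath (of_real a) (of_real b))
           = sgn (b - a) * (strip_axis_dist b - strip_axis_dist a)"
proof -
  let ?g = "linepath (complex_of_real a) (of_real b)"
  define x where "x t = (1 - t) * a + t * b" for t
  have "of_real a \<in> strip" "of_real b \<in> strip"
    using assms by (auto simp: strip_def abs_less_iff)
  then have g: "?g \<in> strip_curves (of_real a) (of_real b)"
    by (rule linepath_in_strip_curves)
  have "((\<lambda>t. rho_strip (?g t) * norm (of_real b - of_real a :: complex))
          has_integral hyp_length_strip ?g) {0..1}"
    by (rule hyp_length_strip_has_integral[OF g]) (auto simp: has_vector_derivative_linepath_within)
  moreover have "((\<lambda>t. rho_strip (?g t) * norm (of_real b - of_real a :: complex))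
      has_integral sgn (b - a) * strip_axis_dist (x 1) - sgn (b - a) * strip_axis_dist (x 0)) {0..1}"
  proof (rule fundamental_theorem_of_calculus)
    fix t :: real assume "t \<in> {0..1}"
    then have "?g t \<in> strip"
      using g by (auto simp: strip_curves_def)
    then have xt: "\<bar>x t\<bar> < 1"
      by (auto simp: strip_def x_def Re_linepath)
    have "(x has_real_derivative b - a) (at t within {0..1})"
      unfolding x_def[abs_def] by (auto intro!: derivative_eq_intros)
    from DERIV_cmult[OF DERIV_chain2[OF strip_axis_dist_has_real_derivative[OF xt] this], of "sgn (b - a)"]
    have "((\<lambda>t. sgn (b - a) * strip_axis_dist (x t)) has_real_derivative
            (pi / 2) / cos (pi / 2 * x t) * \<bar>b - a\<bar>) (at t within {0..1})"
      by (simp add: abs_sgn ac_simps)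
    then show "((\<lambda>t. sgn (b - a) * strip_axis_dist (x t)) has_vector_derivative
            rho_strip (?g t) * norm (of_real b - of_real a :: complex)) (at t within {0..1})"
      by (simp add: has_real_derivative_iff_has_vector_derivative rho_strip_def Re_linepath x_def
          flip: of_real_diff)
  qed simp
  ultimately have "hyp_length_strip ?g = sgn (b - a) * strip_axis_dist (x 1) - sgn (b - a) * strip_axis_dist (x 0)"
    by (rule has_integral_unique)
  then show ?thesis
    by (simp add: x_def right_diff_distrib)
qed

lemma d_strip_of_real:
  assumes "\<bar>a\<bar> < 1" "\<bar>b\<bar> < 1"
  shows "d_strip (of_real a) (of_real b) = \<bar>strip_axis_dist a - strip_axis_dist b\<bar>"
proof (rule antisym)
  have "of_real a \<in> strip" "of_real b \<in> strip"
    using assms by (auto simp: strip_def abs_less_iff)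
  note curve = linepath_in_strip_curves[OF this]
  have "d_strip (of_real a) (of_real b) \<le> hyp_length_strip (linepath (of_real a) (of_real b))"
    unfolding d_strip_def
    by (rule cInf_lower) (use curve hyp_length_strip_nonneg in \<open>auto simp: bdd_below_def\<close>)
  also have "\<dots> \<le> \<bar>strip_axis_dist a - strip_axis_dist b\<bar>"
    unfolding hyp_length_strip_real_linepath[OF assms] by (auto simp: sgn_if abs_minus_commute)
  finally show "d_strip (of_real a) (of_real b) \<le> \<bar>strip_axis_dist a - strip_axis_dist b\<bar>" .
  show "\<bar>strip_axis_dist a - strip_axis_dist b\<bar> \<le> d_strip (of_real a) (of_real b)"
    using d_strip_ge_Re[OF \<open>of_real a \<in> strip\<close> \<open>of_real b \<in> strip\<close>] by simp
qed

lemma closed_hyp_disc_strip_subset: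
  assumes a: "\<bar>a\<bar> < 1"
  shows "closed_hyp_disc_strip (strip_axis_dist a)
           \<subseteq> {z. \<bar>Re z\<bar> \<le> a \<and> \<bar>Im z\<bar> \<le> 2 / pi * strip_axis_dist a}"
proof
  fix z assume "z \<in> closed_hyp_disc_strip (strip_axis_dist a)"
  then have z: "z \<in> strip" and d: "d_strip z 0 \<le> strip_axis_dist a"
    by (auto simp: closed_hyp_disc_strip_def)
  have "0 \<in> strip" by (simp add: strip_def)
  have "\<bar>Re z\<bar> < 1" using z by (auto simp: strip_def)
  have "strip_axis_dist \<bar>Re z\<bar> \<le> strip_axis_dist a"
    using d_strip_ge_Re[OF z \<open>0 \<in> strip\<close>] d abs_strip_axis_dist[OF \<open>\<bar>Re z\<bar> < 1\<close>] by simp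
  moreover have "\<bar>Re z\<bar> \<in> {-1<..<1}" "a \<in> {-1<..<1}"
    using \<open>\<bar>Re z\<bar> < 1\<close> a by auto
  ultimately have "\<bar>Re z\<bar> \<le> a"
    using strict_mono_on_less_eq[OF strip_axis_dist_strict_mono] by blast
  moreover have "pi / 2 * \<bar>Im z\<bar> \<le> strip_axis_dist a"
    using d_strip_ge_Im[OF z \<open>0 \<in> strip\<close>] d by simp
  then have "\<bar>Im z\<bar> \<le> 2 / pi * strip_axis_dist a"
    using pi_gt_zero by (simp add: field_simps)
  ultimately show "z \<in> {z. \<bar>Re z\<bar> \<le> a \<and> \<bar>Im z\<bar> \<le> 2 / pi * strip_axis_dist a}"
    by simp
qed

lemma of_real_in_closed_hyp_disc_strip:
  assumes a: "\<bar>a\<bar> < 1" and x: "\<bar>x\<bar> \<le> a"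
  shows "of_real x \<in> closed_hyp_disc_strip (strip_axis_dist a)"
proof -
  have "\<bar>x\<bar> < 1" using x a by linarith
  then have "d_strip (of_real x) 0 = strip_axis_dist \<bar>x\<bar>"
    using d_strip_of_real[of x 0] abs_strip_axis_dist[of x] by simp
  also have "\<dots> \<le> strip_axis_dist a"
    using strict_mono_on_leD[OF strip_axis_dist_strict_mono] \<open>\<bar>x\<bar> < 1\<close> x a by auto
  finally show ?thesis
    using \<open>\<bar>x\<bar> < 1\<close> by (simp add: closed_hyp_disc_strip_def strip_def abs_less_iff)
qed

lemma Re_image_closed_hyp_disc_strip:
  assumes "\<bar>a\<bar> < 1"
  shows "Re ` closed_hyp_disc_strip (strip_axis_dist a) = {-a .. a}"
proof
  show "Re ` closed_hyp_disc_strip (strip_axis_dist a) \<subseteq> {-a .. a}"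
    using closed_hyp_disc_strip_subset[OF assms] by (force simp: abs_le_iff)
  show "{-a .. a} \<subseteq> Re ` closed_hyp_disc_strip (strip_axis_dist a)"
    using of_real_in_closed_hyp_disc_strip[OF assms] by (force simp: abs_le_iff)
qed

theorem lemma1:
  fixes r :: real
  assumes "0 < r" and "r < 1"
  shows "closed_hyp_disc_strip (lambda_r r) \<subseteq>
           {z. Re z \<in> {-(4/pi) * arctan r .. (4/pi) * arctan r} \<and>
               Im z \<in> {-(2/pi) * lambda_r r .. (2/pi) * lambda_r r}}
         \<and> Re ` closed_hyp_disc_strip (lambda_r r) = {-(4/pi) * arctan r .. (4/pi) * arctan r}"
proof -
  define a where "a = 4 / pi * arctan r"
  have a: "\<bar>a\<bar> < 1"
    using assms abs_four_div_pi_arctan_less_1[of r] by (simp add: a_def)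
  have lambda: "lambda_r r = strip_axis_dist a"
    unfolding a_def by (rule strip_axis_dist_double_arctan[symmetric])
  have "closed_hyp_disc_strip (lambda_r r) \<subseteq>
          {z. Re z \<in> {-a .. a} \<and> Im z \<in> {-(2/pi) * lambda_r r .. (2/pi) * lambda_r r}}"
    using closed_hyp_disc_strip_subset[OF a] by (auto simp: lambda abs_le_iff)
  moreover have "Re ` closed_hyp_disc_strip (lambda_r r) = {-a .. a}"
    unfolding lambda by (rule Re_image_closed_hyp_disc_strip[OF a])
  ultimately show ?thesis
    by (simp add: a_def)
qed

end
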